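(* Let ${}^*\mathbb{Z}=\mathbb{Z}^I/\mathcal{U}$ be an ultrapower of $\mathbb{Z}$ with respect to a nonprincipal ultrafilter $\mathcal{U}$ on a countably infinite set $I$. The map $\mathfrak{m}\mapsto\mathcal{F}(\mathfrak{m})$ is a one-to-one correspondence between the maximal ideals of ${}^*\mathbb{Z}$ and the maximal filters on $\operatorname{pr}({}^*\mathbb{Z})$. Moreover, for a maximal ideal $\mathfrak{m}$, $\mathcal{F}(\mathfrak{m})$ is principal if and only if $\mathfrak{m}=p\,{}^*\mathbb{Z}$ for some $p\in\mathcal{P}({}^*\mathbb{N})$.
   Context: ${}^*\mathbb{N}=\mathbb{N}^I/\mathcal{U}$. For $x,y\in{}^*\mathbb{Z}$, $x\mid y$ means $y=zx$ for some $z\in{}^*\mathbb{Z}$. $\mathcal{P}({}^*\mathbb{N})$ is the set of $p\in{}^*\mathbb{N}$, $p\neq1$, whose only divisors in ${}^*\mathbb{Z}$ are $\pm1,\pm p$. For $n\in{}^*\mathbb{Z}$, $\operatorname{pr}(n)=\{p\in\mathcal{P}({}^*\mathbb{N}):p\mid n\}$ and $\operatorname{pr}({}^*\mathbb{Z})=\{\operatorname{pr}(n):n\in{}^*\mathbb{Z}\}$. A filter on $\operatorname{pr}({}^*\mathbb{Z})$ is $\mathcal{F}\subseteq\operatorname{pr}({}^*\mathbb{Z})$ with (a) $\emptyset\notin\mathcal{F}$; (b) closed under intersections of two members; (c) if $\operatorname{pr}(n)\in\mathcal{F}$ and $\operatorname{pr}(n)\subseteq\operatorname{pr}(m)$ then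 $\operatorname{pr}(m)\in\mathcal{F}$. It is maximal if no filter properly contains it, and principal if there is $n\in{}^*\mathbb{Z}$ such that for $S\in\operatorname{pr}({}^*\mathbb{Z})$, $S\in\mathcal{F}$ iff $\operatorname{pr}(n)\subseteq S$. For an ideal $J$, $\mathcal{F}(J)=\{\operatorname{pr}(n):n\in J\}$. *)

theory Defs
  imports "HOL-Algebra.Ideal" "HOL-Library.Countable_Set"
begin

definition ultrafilter_on :: "'i set \<Rightarrow> 'i set set \<Rightarrow> bool" where
  "ultrafilter_on I U \<longleftrightarrow>
     U \<subseteq> Pow I \<and> I \<in> U \<and> {} \<notin> U \<and>
     (\<forall>A\<in>U. \<forall>B\<in>U. A \<inter> B \<in> U) \<and>
     (\<forall>A\<in>U. \<forall>B. A \<subseteq> B \<and> B \<subseteq> I \<longrightarrow> B \<in> U) \<and>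
     (\<forall>A. A \<subseteq> I \<longrightarrow> A \<in> U \<or> I - A \<in> U)"

definition nonprincipal_ultrafilter_on :: "'i set \<Rightarrow> 'i set set \<Rightarrow> bool" where
  "nonprincipal_ultrafilter_on I U \<longleftrightarrow> ultrafilter_on I U \<and> (\<forall>i\<in>I. {i} \<notin> U)"

definition uprel :: "'i set \<Rightarrow> 'i set set \<Rightarrow> (('i \<Rightarrow> int) \<times> ('i \<Rightarrow> int)) set" where
  "uprel I U = {(f, g). f \<in> I \<rightarrow>\<^sub>E UNIV \<and> g \<in> I \<rightarrow>\<^sub>E UNIV \<and> {i\<in>I. f i = g i} \<in> U}"

definition upclass :: "'i set \<Rightarrow> 'i set set \<Rightarrow> ('i \<Rightarrow> int) \<Rightarrow> ('i \<Rightarrow> int) set" where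
  "upclass I U f = uprel I U `` {restrict f I}"

definition zstar :: "'i set \<Rightarrow> 'i set set \<Rightarrow> ('i \<Rightarrow> int) set ring" where
  "zstar I U =
    \<lparr> carrier = (I \<rightarrow>\<^sub>E UNIV) // uprel I U,
      monoid.mult = (\<lambda>x y. \<Union>f\<in>x. \<Union>g\<in>y. upclass I U (\<lambda>i. f i * g i)),
      one = upclass I U (\<lambda>i. 1),
      zero = upclass I U (\<lambda>i. 0),
      add = (\<lambda>x y. \<Union>f\<in>x. \<Union>g\<in>y. upclass I U (\<lambda>i. f i + g i)) \<rparr>"

definition nstar :: "'i set \<Rightarrow> 'i set set \<Rightarrow> ('i \<Rightarrow> int) set set" where
  "nstar I U = {x \<in> carrier (zstar I U). \<exists>f\<in>x. \<forall>i\<in>I. f i \<ge> 0}"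

definition zdvd :: "'i set \<Rightarrow> 'i set set \<Rightarrow> ('i \<Rightarrow> int) set \<Rightarrow> ('i \<Rightarrow> int) set \<Rightarrow> bool" where
  "zdvd I U x y \<longleftrightarrow> (\<exists>z\<in>carrier (zstar I U). y = z \<otimes>\<^bsub>zstar I U\<^esub> x)"

definition hprimes :: "'i set \<Rightarrow> 'i set set \<Rightarrow> ('i \<Rightarrow> int) set set" where
  "hprimes I U = {p \<in> nstar I U. p \<noteq> \<one>\<^bsub>zstar I U\<^esub> \<and>
     (\<forall>d\<in>carrier (zstar I U). zdvd I U d p \<longrightarrow>
        d \<in> {\<one>\<^bsub>zstar I U\<^esub>, \<ominus>\<^bsub>zstar I U\<^esub> \<one>\<^bsub>zstar I U\<^esub>, p, \<ominus>\<^bsub>zstar I U\<^esub> p})}"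

definition pr :: "'i set \<Rightarrow> 'i set set \<Rightarrow> ('i \<Rightarrow> int) set \<Rightarrow> ('i \<Rightarrow> int) set set" where
  "pr I U n = {p \<in> hprimes I U. zdvd I U p n}"

definition prZ :: "'i set \<Rightarrow> 'i set set \<Rightarrow> ('i \<Rightarrow> int) set set set" where
  "prZ I U = pr I U ` carrier (zstar I U)"

definition pr_filter :: "'i set \<Rightarrow> 'i set set \<Rightarrow> ('i \<Rightarrow> int) set set set \<Rightarrow> bool" where
  "pr_filter I U F \<longleftrightarrow> F \<subseteq> prZ I U \<and> {} \<notin> F \<and>
     (\<forall>S\<in>F. \<forall>T\<in>F. S \<inter> T \<in> F) \<and>
     (\<forall>S\<in>F. \<forall>T\<in>prZ I U. S \<subseteq> T \<longrightarrow> T \<in> F)"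

definition maximal_pr_filter :: "'i set \<Rightarrow> 'i set set \<Rightarrow> ('i \<Rightarrow> int) set set set \<Rightarrow> bool" where
  "maximal_pr_filter I U F \<longleftrightarrow> pr_filter I U F \<and>
     (\<forall>G. pr_filter I U G \<and> F \<subseteq> G \<longrightarrow> G = F)"

definition principal_pr_filter :: "'i set \<Rightarrow> 'i set set \<Rightarrow> ('i \<Rightarrow> int) set set set \<Rightarrow> bool" where
  "principal_pr_filter I U F \<longleftrightarrow>
     (\<exists>n\<in>carrier (zstar I U). \<forall>S\<in>prZ I U. S \<in> F \<longleftrightarrow> pr I U n \<subseteq> S)"

definition ideal_filter :: "'i set \<Rightarrow> 'i set set \<Rightarrow> ('i \<Rightarrow> int) set set \<Rightarrow> ('i \<Rightarrow> int) set set set" where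
  "ideal_filter I U J = pr I U ` J"

end

theory Submission
  imports Defs "HOL-Computational_Algebra.Primes"
begin

text \<open>
  Gcds and Bezout identities in \<open>\<int>\<close> can be taken coordinatewise, so every pair \<open>a, b\<close>
  in \<open>*\<int>\<close> has a common divisor \<open>d = u a + v b\<close>, and then \<open>pr(d) = pr(a) \<inter> pr(b)\<close>.
  Coordinatewise prime divisors show that \<open>pr(n) = {}\<close> exactly for the units \<open>n\<close>.
  In a maximal ideal \<open>m\<close>, every \<open>k \<notin> m\<close> satisfies \<open>1 = x + a k\<close> with \<open>x \<in> m\<close>, whence
  \<open>pr(x) \<inter> pr(k) = {}\<close>; together with the first fact this shows that membership in \<open>m\<close> is
  decided by \<open>pr\<close> alone (\<open>n \<in> m\<close> and \<open>pr(n) \<subseteq> pr(k)\<close> force \<open>k \<in> m\<close>). Hence \<open>\<F>(m)\<close>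
  is a maximal filter and \<open>m\<close> is recovered from it, while a maximal filter \<open>F\<close> pulls back to
  the maximal ideal \<open>{n. pr(n) \<in> F}\<close>. If \<open>\<F>(m)\<close> is generated by \<open>pr(n)\<close>, a hyperprime
  \<open>p\<close> dividing \<open>n\<close> lies in \<open>m\<close>, and for \<open>k \<in> m\<close> the common divisor of \<open>p\<close> and \<open>k\<close>
  is a non-unit divisor of \<open>p\<close>, i.e. \<open>\<plusminus>p\<close>; so \<open>m = p *\<int>\<close>.
\<close>

section \<open>Ideals of commutative rings\<close>

lemma (in ring) ideal_eq_carrier_if_Units:
  assumes "ideal J R" "u \<in> J" "u \<in> Units R"
  shows "J = carrier R"
proof -
  interpret ideal J R by fact
  have "inv u \<otimes> u \<in> J" using assms by (intro I_l_closed) auto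
  then have "\<one> \<in> J" using assms(3) by simp
  then show ?thesis by (rule one_imp_carrier)
qed

lemma (in ring) ideal_lincomb_closed:
  assumes "ideal J R" "a \<in> J" "b \<in> J" "u \<in> carrier R" "v \<in> carrier R"
  shows "u \<otimes> a \<oplus> v \<otimes> b \<in> J"
proof -
  interpret ideal J R by fact
  show ?thesis using assms by (intro a_closed I_l_closed)
qed

lemma (in cring) Units_if_one_in_cgenideal:
  assumes "p \<in> carrier R" "\<one> \<in> PIdl p"
  shows "p \<in> Units R"
proof -
  obtain x where "x \<in> carrier R" "\<one> = x \<otimes> p" using assms(2) unfolding cgenideal_def by blast
  then show ?thesis unfolding Units_def using assms(1) m_comm by auto
qed

lemma (in cring) maximalideal_comaximal:
  assumes "maximalideal m R" "k \<in> carrier R" "k \<notin> m"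
  obtains x a where "x \<in> m" "a \<in> carrier R" "\<one> = x \<oplus> a \<otimes> k"
proof -
  interpret maximalideal m R by fact
  have ideal_k: "ideal (PIdl k) R" using assms(2) by (rule cgenideal_ideal)
  have sum: "ideal (m <+> PIdl k) R" by (rule add_ideals[OF is_ideal ideal_k])
  have "m \<union> PIdl k \<subseteq> carrier R" using a_subset ideal.Icarr[OF ideal_k] by blast
  then have "m \<union> PIdl k \<subseteq> m <+> PIdl k"
    using genideal_self union_genideal[OF is_ideal ideal_k] by metis
  moreover have "k \<in> PIdl k" using assms(2) by (rule cgenideal_self)
  moreover have "m <+> PIdl k \<subseteq> carrier R" using ideal.Icarr[OF sum] by blast
  ultimately have "m <+> PIdl k = carrier R"
    using I_maximal[OF sum] assms(3) by blast
  then have "\<one> \<in> m <+> PIdl k" by simp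
  then obtain x y where "x \<in> m" "y \<in> PIdl k" "\<one> = x \<oplus> y" unfolding set_add_def' by blast
  then show ?thesis using that unfolding cgenideal_def by blast
qed

lemma (in cring) idealI_comm:
  assumes "J \<subseteq> carrier R" "\<zero> \<in> J"
    and add: "\<And>a b. a \<in> J \<Longrightarrow> b \<in> J \<Longrightarrow> a \<oplus> b \<in> J"
    and mult: "\<And>a x. a \<in> J \<Longrightarrow> x \<in> carrier R \<Longrightarrow> x \<otimes> a \<in> J"
  shows "ideal J R"
proof (rule idealI)
  show "subgroup J (add_monoid R)"
  proof (rule add.subgroupI)
    fix a assume a: "a \<in> J"
    then have "a \<in> carrier R" using assms(1) by blast
    then have "\<ominus> a = (\<ominus> \<one>) \<otimes> a" by (simp add: l_minus)
    then show "\<ominus> a \<in> J" using mult[OF a] by simp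
  qed (use assms in auto)
  fix a x assume "a \<in> J" "x \<in> carrier R"
  then show "a \<otimes> x \<in> J" using mult assms(1) m_comm by (metis subsetD)
qed (use mult in \<open>auto intro: ring_axioms\<close>)

section \<open>The ultrapower ring\<close>

locale int_ultrapower =
  fixes I :: "'i set" and U :: "'i set set"
  assumes ultrafilter: "ultrafilter_on I U"
begin

abbreviation "R \<equiv> zstar I U"
abbreviation "cls \<equiv> upclass I U"

lemma
  shows I_in_U: "I \<in> U" and empty_notin_U: "{} \<notin> U"
    and U_Int: "A \<in> U \<Longrightarrow> B \<in> U \<Longrightarrow> A \<inter> B \<in> U"
    and U_mono: "A \<in> U \<Longrightarrow> A \<subseteq> B \<Longrightarrow> B \<subseteq> I \<Longrightarrow> B \<in> U"
    and U_ultra: "A \<subseteq> I \<Longrightarrow> A \<in> U \<or> I - A \<in> U"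
  using ultrafilter unfolding ultrafilter_on_def by blast+

text \<open>\<open>U\<close> as a filter on the index type, so that the library's \<open>eventually\<close> calculus applies.\<close>

definition ufilter :: "'i filter" where
  "ufilter = Abs_filter (\<lambda>P. {i\<in>I. P i} \<in> U)"

lemma eventually_ufilter: "eventually P ufilter \<longleftrightarrow> {i\<in>I. P i} \<in> U"
proof -
  have "is_filter (\<lambda>P. {i\<in>I. P i} \<in> U)"
  proof
    show "{i\<in>I. True} \<in> U" using I_in_U by simp
  next
    fix P Q assume "{i\<in>I. P i} \<in> U" "{i\<in>I. Q i} \<in> U"
    moreover have "{i\<in>I. P i} \<inter> {i\<in>I. Q i} = {i\<in>I. P i \<and> Q i}" by blast
    ultimately show "{i\<in>I. P i \<and> Q i} \<in> U" by (metis U_Int)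
  next
    fix P Q assume "\<forall>i. P i \<longrightarrow> Q i" "{i\<in>I. P i} \<in> U"
    then show "{i\<in>I. Q i} \<in> U" by (auto elim: U_mono)
  qed
  then show ?thesis unfolding ufilter_def by (rule eventually_Abs_filter)
qed

lemma ufilter_ultra: "eventually P ufilter \<or> eventually (\<lambda>i. \<not> P i) ufilter"
proof -
  have "I - {i\<in>I. P i} = {i\<in>I. \<not> P i}" by blast
  then show ?thesis using U_ultra[of "{i\<in>I. P i}"] unfolding eventually_ufilter by auto
qed

lemma eventually_disj_ufilter:
  assumes "\<forall>\<^sub>F i in ufilter. P i \<or> Q i"
  shows "eventually P ufilter \<or> eventually Q ufilter"
proof (rule disjCI)
  assume "\<not> eventually Q ufilter"
  then have "\<forall>\<^sub>F i in ufilter. \<not> Q i" using ufilter_ultra by blast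
  with assms show "eventually P ufilter" by (auto elim: eventually_elim2)
qed

lemma uprel_iff:
  "(f, g) \<in> uprel I U \<longleftrightarrow> f \<in> I \<rightarrow>\<^sub>E UNIV \<and> g \<in> I \<rightarrow>\<^sub>E UNIV \<and> (\<forall>\<^sub>F i in ufilter. f i = g i)"
  unfolding uprel_def eventually_ufilter by simp

lemma equiv_uprel: "equiv (I \<rightarrow>\<^sub>E UNIV) (uprel I U)"
proof (rule equivI)
  show "refl_on (I \<rightarrow>\<^sub>E UNIV) (uprel I U)"
    unfolding refl_on_def uprel_iff by auto
  show "sym (uprel I U)"
    unfolding sym_def uprel_iff by (auto simp: eq_commute)
  show "trans (uprel I U)"
    unfolding trans_def uprel_iff by (auto elim: eventually_elim2)
  show "uprel I U \<subseteq> (I \<rightarrow>\<^sub>E UNIV) \<times> (I \<rightarrow>\<^sub>E UNIV)"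
    unfolding uprel_def by auto
qed

lemma cls_eq_iff: "cls f = cls g \<longleftrightarrow> (\<forall>\<^sub>F i in ufilter. f i = g i)"
proof -
  have "cls f = cls g \<longleftrightarrow> (restrict f I, restrict g I) \<in> uprel I U"
    unfolding upclass_def by (rule eq_equiv_class_iff[OF equiv_uprel]) auto
  also have "\<dots> \<longleftrightarrow> (\<forall>\<^sub>F i in ufilter. f i = g i)"
    unfolding uprel_def eventually_ufilter by (auto cong: conj_cong)
  finally show ?thesis .
qed

lemma mem_cls_iff: "h \<in> cls f \<longleftrightarrow> h \<in> I \<rightarrow>\<^sub>E UNIV \<and> (\<forall>\<^sub>F i in ufilter. f i = h i)"
  unfolding upclass_def uprel_def eventually_ufilter by (auto cong: conj_cong)

lemma restrict_mem_cls: "restrict f I \<in> cls f"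
  unfolding mem_cls_iff eventually_ufilter using I_in_U by simp

lemma carrier_zstar: "carrier R = range cls"
proof -
  have "(I \<rightarrow>\<^sub>E UNIV) // uprel I U = range cls"
  proof
    show "(I \<rightarrow>\<^sub>E UNIV) // uprel I U \<subseteq> range cls"
    proof
      fix x assume "x \<in> (I \<rightarrow>\<^sub>E UNIV) // uprel I U"
      then obtain f where "f \<in> I \<rightarrow>\<^sub>E UNIV" "x = uprel I U `` {f}" unfolding quotient_def by blast
      then have "x = cls f" unfolding upclass_def by (simp add: PiE_restrict)
      then show "x \<in> range cls" by blast
    qed
    show "range cls \<subseteq> (I \<rightarrow>\<^sub>E UNIV) // uprel I U"
      unfolding upclass_def quotient_def by (auto intro!: UN_I[of "restrict _ I"])
  qed
  then show ?thesis unfolding zstar_def by simp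
qed

lemma cls_closed [simp]: "cls f \<in> carrier R"
  by (simp add: carrier_zstar)

lemma zstar_cases [cases set]:
  assumes "x \<in> carrier R" obtains f where "x = cls f"
  using assms carrier_zstar by auto

lemma UN_cls_cls:
  assumes "\<And>a b. a \<in> cls f \<Longrightarrow> b \<in> cls g \<Longrightarrow> cls (h a b) = cls (h f g)"
  shows "(\<Union>a\<in>cls f. \<Union>b\<in>cls g. cls (h a b)) = cls (h f g)"
proof -
  have "(\<Union>a\<in>cls f. \<Union>b\<in>cls g. cls (h a b)) = (\<Union>a\<in>cls f. \<Union>b\<in>cls g. cls (h f g))"
    using assms by auto
  also have "\<dots> = cls (h f g)" using restrict_mem_cls[of f] restrict_mem_cls[of g] by blast
  finally show ?thesis .
qed

lemma mult_cls [simp]: "cls f \<otimes>\<^bsub>R\<^esub> cls g = cls (\<lambda>i. f i * g i)"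
proof -
  have "(\<Union>a\<in>cls f. \<Union>b\<in>cls g. cls (\<lambda>i. a i * b i)) = cls (\<lambda>i. f i * g i)"
    by (rule UN_cls_cls) (auto simp: mem_cls_iff cls_eq_iff elim: eventually_elim2)
  then show ?thesis unfolding zstar_def by simp
qed

lemma add_cls [simp]: "cls f \<oplus>\<^bsub>R\<^esub> cls g = cls (\<lambda>i. f i + g i)"
proof -
  have "(\<Union>a\<in>cls f. \<Union>b\<in>cls g. cls (\<lambda>i. a i + b i)) = cls (\<lambda>i. f i + g i)"
    by (rule UN_cls_cls) (auto simp: mem_cls_iff cls_eq_iff elim: eventually_elim2)
  then show ?thesis unfolding zstar_def by simp
qed

lemma one_zstar: "\<one>\<^bsub>R\<^esub> = cls (\<lambda>i. 1)"
  unfolding zstar_def by simp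

lemma zero_zstar: "\<zero>\<^bsub>R\<^esub> = cls (\<lambda>i. 0)"
  unfolding zstar_def by simp

lemma cring_zstar: "cring R"
proof (rule cringI)
  show "abelian_group R"
  proof (rule abelian_groupI)
    fix x y z assume "x \<in> carrier R" "y \<in> carrier R" "z \<in> carrier R"
    then show "x \<oplus>\<^bsub>R\<^esub> y \<oplus>\<^bsub>R\<^esub> z = x \<oplus>\<^bsub>R\<^esub> (y \<oplus>\<^bsub>R\<^esub> z)"
      by (auto elim!: zstar_cases simp: add.assoc)
  next
    fix x y assume "x \<in> carrier R" "y \<in> carrier R"
    then show "x \<oplus>\<^bsub>R\<^esub> y \<in> carrier R" "x \<oplus>\<^bsub>R\<^esub> y = y \<oplus>\<^bsub>R\<^esub> x"
      by (auto elim!: zstar_cases simp: add.commute)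
  next
    fix x assume "x \<in> carrier R"
    then obtain f where f: "x = cls f" by (rule zstar_cases)
    show "\<zero>\<^bsub>R\<^esub> \<oplus>\<^bsub>R\<^esub> x = x" by (simp add: f zero_zstar)
    have "cls (\<lambda>i. - f i) \<oplus>\<^bsub>R\<^esub> x = \<zero>\<^bsub>R\<^esub>" by (simp add: f zero_zstar)
    then show "\<exists>y\<in>carrier R. y \<oplus>\<^bsub>R\<^esub> x = \<zero>\<^bsub>R\<^esub>" by (metis cls_closed)
  qed (simp add: zero_zstar)
  show "comm_monoid R"
  proof (rule comm_monoidI)
    fix x y z assume "x \<in> carrier R" "y \<in> carrier R" "z \<in> carrier R"
    then show "x \<otimes>\<^bsub>R\<^esub> y \<otimes>\<^bsub>R\<^esub> z = x \<otimes>\<^bsub>R\<^esub> (y \<otimes>\<^bsub>R\<^esub> z)"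
      by (auto elim!: zstar_cases simp: mult.assoc)
  next
    fix x y assume "x \<in> carrier R" "y \<in> carrier R"
    then show "x \<otimes>\<^bsub>R\<^esub> y \<in> carrier R" "x \<otimes>\<^bsub>R\<^esub> y = y \<otimes>\<^bsub>R\<^esub> x"
      by (auto elim!: zstar_cases simp: mult.commute)
  next
    fix x assume "x \<in> carrier R"
    then show "\<one>\<^bsub>R\<^esub> \<otimes>\<^bsub>R\<^esub> x = x" by (auto elim!: zstar_cases simp: one_zstar)
  qed (simp add: one_zstar)
  fix x y z assume "x \<in> carrier R" "y \<in> carrier R" "z \<in> carrier R"
  then show "(x \<oplus>\<^bsub>R\<^esub> y) \<otimes>\<^bsub>R\<^esub> z = x \<otimes>\<^bsub>R\<^esub> z \<oplus>\<^bsub>R\<^esub> y \<otimes>\<^bsub>R\<^esub> z"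
    by (auto elim!: zstar_cases simp: distrib_right)
qed

sublocale zstar: cring R
  by (rule cring_zstar)

section \<open>Divisibility and hyperprimes\<close>

lemma neg_cls [simp]: "\<ominus>\<^bsub>R\<^esub> cls f = cls (\<lambda>i. - f i)"
  by (rule zstar.minus_equality) (simp_all add: zero_zstar)

lemma cls_in_Units_iff: "cls f \<in> Units R \<longleftrightarrow> (\<forall>\<^sub>F i in ufilter. is_unit (f i))"
proof
  assume "cls f \<in> Units R"
  then obtain y where y: "y \<in> carrier R" "y \<otimes>\<^bsub>R\<^esub> cls f = \<one>\<^bsub>R\<^esub>"
    unfolding Units_def by blast
  obtain h where "y = cls h" using y(1) by (rule zstar_cases)
  then have "\<forall>\<^sub>F i in ufilter. h i * f i = 1" using y(2) by (simp add: one_zstar cls_eq_iff)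
  then show "\<forall>\<^sub>F i in ufilter. is_unit (f i)"
    by (rule eventually_mono) (auto simp: zmult_eq_1_iff)
next
  assume "\<forall>\<^sub>F i in ufilter. is_unit (f i)"
  then have "\<forall>\<^sub>F i in ufilter. f i * f i = 1"
    by (rule eventually_mono) (auto simp: zmult_eq_1_iff abs_if split: if_splits)
  then have "cls f \<otimes>\<^bsub>R\<^esub> cls f = \<one>\<^bsub>R\<^esub>" by (simp add: one_zstar cls_eq_iff)
  then show "cls f \<in> Units R" unfolding Units_def using cls_closed[of f] by blast
qed

lemma zdvd_iff_mem_cgenideal: "zdvd I U p n \<longleftrightarrow> n \<in> PIdl\<^bsub>R\<^esub> p"
  unfolding zdvd_def cgenideal_def by blast

lemma cls_mem_cgenideal_iff:
  "cls n \<in> PIdl\<^bsub>R\<^esub> (cls d) \<longleftrightarrow> (\<exists>z. \<forall>\<^sub>F i in ufilter. n i = z i * d i)"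
proof
  assume "cls n \<in> PIdl\<^bsub>R\<^esub> (cls d)"
  then obtain z where z: "cls n = z \<otimes>\<^bsub>R\<^esub> cls d" "z \<in> carrier R" unfolding cgenideal_def by blast
  obtain h where "z = cls h" using z(2) by (rule zstar_cases)
  then show "\<exists>z. \<forall>\<^sub>F i in ufilter. n i = z i * d i" using z(1) by (auto simp: cls_eq_iff)
next
  assume "\<exists>z. \<forall>\<^sub>F i in ufilter. n i = z i * d i"
  then obtain z where "cls n = cls z \<otimes>\<^bsub>R\<^esub> cls d" by (auto simp: cls_eq_iff)
  then show "cls n \<in> PIdl\<^bsub>R\<^esub> (cls d)" unfolding cgenideal_def using cls_closed by blast
qed

lemma cls_eq_disj:
  assumes "\<forall>\<^sub>F i in ufilter. f i = a i \<or> f i = b i"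
  shows "cls f = cls a \<or> cls f = cls b"
  using eventually_disj_ufilter[OF assms] by (simp add: cls_eq_iff)

lemma hprimes_carrier: "hprimes I U \<subseteq> carrier R"
  unfolding hprimes_def nstar_def by blast

lemma int_prime_divisor_cases:
  fixes p d :: int
  assumes "prime p" "d dvd p"
  shows "(d = 1 \<or> d = -1) \<or> (d = p \<or> d = -p)"
proof -
  have "is_unit d \<or> p dvd d" using assms prime_elem_imp_irreducible irreducible_altdef by blast
  then have "\<bar>d\<bar> = \<bar>1\<bar> \<or> \<bar>d\<bar> = \<bar>p\<bar>" using assms(2) by (auto intro: zdvd_antisym_abs)
  then show ?thesis by (auto simp only: abs_eq_iff)
qed

lemma cls_prime_in_hprimes:
  assumes prime: "\<And>i. prime (g i)"
  shows "cls g \<in> hprimes I U"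
proof -
  have "\<forall>i\<in>I. restrict g I i \<ge> 0" using prime by (simp add: prime_ge_0_int)
  then have nonneg: "cls g \<in> nstar I U"
    unfolding nstar_def by (intro CollectI conjI cls_closed bexI[OF _ restrict_mem_cls])
  have "cls g \<noteq> \<one>\<^bsub>R\<^esub>"
  proof
    assume "cls g = \<one>\<^bsub>R\<^esub>"
    then have "\<forall>\<^sub>F i in ufilter. False"
      unfolding one_zstar cls_eq_iff by (rule eventually_mono) (metis prime not_prime_1)
    then show False using empty_notin_U by (simp add: eventually_ufilter)
  qed
  moreover have "d \<in> {\<one>\<^bsub>R\<^esub>, \<ominus>\<^bsub>R\<^esub> \<one>\<^bsub>R\<^esub>, cls g, \<ominus>\<^bsub>R\<^esub> cls g}"
    if "d \<in> carrier R" and dvd: "zdvd I U d (cls g)" for d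
  proof -
    obtain h where d: "d = cls h" using \<open>d \<in> carrier R\<close> by (rule zstar_cases)
    have "cls g \<in> PIdl\<^bsub>R\<^esub> (cls h)" using dvd d by (simp add: zdvd_iff_mem_cgenideal)
    then obtain z where "\<forall>\<^sub>F i in ufilter. g i = z i * h i"
      unfolding cls_mem_cgenideal_iff by blast
    then have "\<forall>\<^sub>F i in ufilter. (h i = 1 \<or> h i = -1) \<or> (h i = g i \<or> h i = - g i)"
      by (rule eventually_mono) (metis dvdI mult.commute int_prime_divisor_cases prime)
    from eventually_disj_ufilter[OF this] show ?thesis
    proof
      assume "\<forall>\<^sub>F i in ufilter. h i = 1 \<or> h i = -1"
      from cls_eq_disj[OF this] show ?thesis by (auto simp: d one_zstar)
    next
      assume "\<forall>\<^sub>F i in ufilter. h i = g i \<or> h i = - g i"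
      from cls_eq_disj[OF this] show ?thesis by (auto simp: d)
    qed
  qed
  ultimately show ?thesis using nonneg unfolding hprimes_def by blast
qed

lemma hprimes_not_Units: "p \<in> hprimes I U \<Longrightarrow> p \<notin> Units R"
proof
  assume "p \<in> hprimes I U" "p \<in> Units R"
  then obtain f where f: "f \<in> p" "\<forall>i\<in>I. f i \<ge> 0" and "p \<in> carrier R" "p \<noteq> \<one>\<^bsub>R\<^esub>"
    unfolding hprimes_def nstar_def by auto
  obtain g where p: "p = cls g" using \<open>p \<in> carrier R\<close> by (rule zstar_cases)
  then have "\<forall>\<^sub>F i in ufilter. g i = f i" using f(1) by (simp add: mem_cls_iff)
  moreover have "\<forall>\<^sub>F i in ufilter. i \<in> I" by (simp add: eventually_ufilter I_in_U)
  moreover have "\<forall>\<^sub>F i in ufilter. is_unit (g i)" using \<open>p \<in> Units R\<close> p cls_in_Units_iff by simp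
  ultimately have "\<forall>\<^sub>F i in ufilter. g i = 1" by eventually_elim (use f(2) in auto)
  then show False using \<open>p \<noteq> \<one>\<^bsub>R\<^esub>\<close> by (simp add: p one_zstar cls_eq_iff)
qed

text \<open>Units get an arbitrary prime, so that a prime can be chosen at every index.\<close>

lemma int_prime_divisor: "\<exists>q::int. prime q \<and> (\<not> is_unit n \<longrightarrow> q dvd n)"
proof (cases "n = 0 \<or> is_unit n")
  case True
  then show ?thesis by (intro exI[of _ 2]) auto
next
  case False
  then show ?thesis using prime_divisor_exists by blast
qed

lemma nonunit_has_hprime_divisor:
  assumes "n \<in> carrier R" "n \<notin> Units R"
  shows "\<exists>p\<in>hprimes I U. n \<in> PIdl\<^bsub>R\<^esub> p"
proof -
  obtain f where n: "n = cls f" using assms(1) by (rule zstar_cases)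
  have "\<forall>i. \<exists>q. prime q \<and> (\<not> is_unit (f i) \<longrightarrow> q dvd f i)"
    using int_prime_divisor by blast
  then obtain g where g: "\<And>i. prime (g i)" "\<And>i. \<not> is_unit (f i) \<Longrightarrow> g i dvd f i"
    by (auto dest!: choice)
  have "\<not> (\<forall>\<^sub>F i in ufilter. is_unit (f i))" using assms(2) n cls_in_Units_iff by simp
  then have "\<forall>\<^sub>F i in ufilter. \<not> is_unit (f i)" using ufilter_ultra by blast
  then have "\<forall>\<^sub>F i in ufilter. f i = f i div g i * g i" by (rule eventually_mono) (simp add: g(2))
  then have "n \<in> PIdl\<^bsub>R\<^esub> (cls g)" unfolding n cls_mem_cgenideal_iff
    by (rule exI[of _ "\<lambda>i. f i div g i"])
  moreover have "cls g \<in> hprimes I U" by (rule cls_prime_in_hprimes) (rule g(1))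
  ultimately show ?thesis by blast
qed

lemma zstar_bezout:
  assumes "a \<in> carrier R" "b \<in> carrier R"
  shows "\<exists>u\<in>carrier R. \<exists>v\<in>carrier R.
           a \<in> PIdl\<^bsub>R\<^esub> (u \<otimes>\<^bsub>R\<^esub> a \<oplus>\<^bsub>R\<^esub> v \<otimes>\<^bsub>R\<^esub> b) \<and> b \<in> PIdl\<^bsub>R\<^esub> (u \<otimes>\<^bsub>R\<^esub> a \<oplus>\<^bsub>R\<^esub> v \<otimes>\<^bsub>R\<^esub> b)"
proof -
  obtain f where a: "a = cls f" using assms(1) by (rule zstar_cases)
  obtain g where b: "b = cls g" using assms(2) by (rule zstar_cases)
  have "\<forall>i. \<exists>u v. u * f i + v * g i = gcd (f i) (g i)"
    using bezout_int by blast
  then obtain u where "\<forall>i. \<exists>v. u i * f i + v * g i = gcd (f i) (g i)"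
    by (auto dest!: choice)
  then obtain v where uv: "\<And>i. u i * f i + v i * g i = gcd (f i) (g i)"
    by (auto dest!: choice)
  have d: "cls u \<otimes>\<^bsub>R\<^esub> a \<oplus>\<^bsub>R\<^esub> cls v \<otimes>\<^bsub>R\<^esub> b = cls (\<lambda>i. gcd (f i) (g i))"
    unfolding a b by (simp only: mult_cls add_cls uv)
  have "a \<in> PIdl\<^bsub>R\<^esub> (cls (\<lambda>i. gcd (f i) (g i)))"
    unfolding a cls_mem_cgenideal_iff
    by (intro exI[of _ "\<lambda>i. f i div gcd (f i) (g i)"] always_eventually allI) simp
  moreover have "b \<in> PIdl\<^bsub>R\<^esub> (cls (\<lambda>i. gcd (f i) (g i)))"
    unfolding b cls_mem_cgenideal_iff
    by (intro exI[of _ "\<lambda>i. g i div gcd (f i) (g i)"] always_eventually allI) simp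
  ultimately show ?thesis
    unfolding d[symmetric] by (intro bexI[of _ "cls u"] bexI[of _ "cls v"] conjI cls_closed)
qed

section \<open>Prime supports\<close>

lemma mem_pr_iff: "p \<in> pr I U n \<longleftrightarrow> p \<in> hprimes I U \<and> n \<in> PIdl\<^bsub>R\<^esub> p"
  unfolding pr_def zdvd_iff_mem_cgenideal by simp

lemma ideal_cgenideal_hprime: "p \<in> hprimes I U \<Longrightarrow> ideal (PIdl\<^bsub>R\<^esub> p) R"
  using hprimes_carrier by (blast intro: zstar.cgenideal_ideal)

lemma hprime_mem_pr_self: "p \<in> hprimes I U \<Longrightarrow> p \<in> pr I U p"
  unfolding mem_pr_iff using hprimes_carrier by (blast intro: zstar.cgenideal_self)

lemma pr_in_prZ: "n \<in> carrier R \<Longrightarrow> pr I U n \<in> prZ I U"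
  unfolding prZ_def by blast

lemma pr_antimono: "a \<in> PIdl\<^bsub>R\<^esub> b \<Longrightarrow> pr I U b \<subseteq> pr I U a"
  unfolding subset_iff mem_pr_iff
  using zstar.cgenideal_minimal[OF ideal_cgenideal_hprime] by blast

lemma pr_subset_pr_mult: "x \<in> carrier R \<Longrightarrow> pr I U a \<subseteq> pr I U (x \<otimes>\<^bsub>R\<^esub> a)"
  by (rule pr_antimono) (auto simp: cgenideal_def)

lemma pr_lincomb:
  assumes "u \<in> carrier R" "v \<in> carrier R"
  shows "pr I U a \<inter> pr I U b \<subseteq> pr I U (u \<otimes>\<^bsub>R\<^esub> a \<oplus>\<^bsub>R\<^esub> v \<otimes>\<^bsub>R\<^esub> b)"
  unfolding subset_iff Int_iff mem_pr_iff
  using zstar.ideal_lincomb_closed[OF ideal_cgenideal_hprime _ _ assms] by blast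

lemma pr_eq_Int_lincomb:
  assumes "a \<in> carrier R" "b \<in> carrier R"
  shows "\<exists>u\<in>carrier R. \<exists>v\<in>carrier R. pr I U (u \<otimes>\<^bsub>R\<^esub> a \<oplus>\<^bsub>R\<^esub> v \<otimes>\<^bsub>R\<^esub> b) = pr I U a \<inter> pr I U b"
proof -
  obtain u v where uv: "u \<in> carrier R" "v \<in> carrier R"
    and "a \<in> PIdl\<^bsub>R\<^esub> (u \<otimes>\<^bsub>R\<^esub> a \<oplus>\<^bsub>R\<^esub> v \<otimes>\<^bsub>R\<^esub> b)" "b \<in> PIdl\<^bsub>R\<^esub> (u \<otimes>\<^bsub>R\<^esub> a \<oplus>\<^bsub>R\<^esub> v \<otimes>\<^bsub>R\<^esub> b)"
    using zstar_bezout[OF assms] by blast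
  then have "pr I U (u \<otimes>\<^bsub>R\<^esub> a \<oplus>\<^bsub>R\<^esub> v \<otimes>\<^bsub>R\<^esub> b) \<subseteq> pr I U a \<inter> pr I U b"
    using pr_antimono by blast
  then show ?thesis using pr_lincomb[OF uv] uv by blast
qed

lemma prZ_Int:
  assumes "S \<in> prZ I U" "T \<in> prZ I U"
  shows "S \<inter> T \<in> prZ I U"
proof -
  obtain a b where ab: "a \<in> carrier R" "b \<in> carrier R" and "S = pr I U a" "T = pr I U b"
    using assms unfolding prZ_def by blast
  moreover obtain u v where "u \<in> carrier R" "v \<in> carrier R"
    and "pr I U (u \<otimes>\<^bsub>R\<^esub> a \<oplus>\<^bsub>R\<^esub> v \<otimes>\<^bsub>R\<^esub> b) = pr I U a \<inter> pr I U b"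
    using pr_eq_Int_lincomb[OF ab] by blast
  ultimately show ?thesis using pr_in_prZ[of "u \<otimes>\<^bsub>R\<^esub> a \<oplus>\<^bsub>R\<^esub> v \<otimes>\<^bsub>R\<^esub> b"] by simp
qed

lemma pr_Int_in_ideal:
  assumes "ideal J R" "a \<in> J" "b \<in> J"
  shows "\<exists>d\<in>J. pr I U d = pr I U a \<inter> pr I U b"
proof -
  have ab: "a \<in> carrier R" "b \<in> carrier R" using ideal.Icarr[OF assms(1)] assms(2,3) by auto
  obtain u v where uv: "u \<in> carrier R" "v \<in> carrier R"
    and pr: "pr I U (u \<otimes>\<^bsub>R\<^esub> a \<oplus>\<^bsub>R\<^esub> v \<otimes>\<^bsub>R\<^esub> b) = pr I U a \<inter> pr I U b"
    using pr_eq_Int_lincomb[OF ab] by blast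
  have "u \<otimes>\<^bsub>R\<^esub> a \<oplus>\<^bsub>R\<^esub> v \<otimes>\<^bsub>R\<^esub> b \<in> J"
    using zstar.ideal_lincomb_closed[OF assms uv] .
  then show ?thesis using pr by blast
qed

lemma pr_eq_empty_iff:
  assumes "n \<in> carrier R"
  shows "pr I U n = {} \<longleftrightarrow> n \<in> Units R"
proof
  assume empty: "pr I U n = {}"
  show "n \<in> Units R"
  proof (rule ccontr)
    assume "n \<notin> Units R"
    then obtain p where "p \<in> hprimes I U" "n \<in> PIdl\<^bsub>R\<^esub> p"
      using nonunit_has_hprime_divisor[OF assms] by blast
    then show False using empty by (simp add: mem_pr_iff set_eq_iff)
  qed
next
  assume unit: "n \<in> Units R"
  have "p \<in> Units R" if "p \<in> hprimes I U" "n \<in> PIdl\<^bsub>R\<^esub> p" for p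
  proof -
    have "PIdl\<^bsub>R\<^esub> p = carrier R"
      using zstar.ideal_eq_carrier_if_Units[OF ideal_cgenideal_hprime] that unit by blast
    then show ?thesis using hprimes_carrier that(1) by (auto intro: zstar.Units_if_one_in_cgenideal)
  qed
  then show "pr I U n = {}" using hprimes_not_Units by (auto simp: mem_pr_iff)
qed

lemma pr_one: "pr I U \<one>\<^bsub>R\<^esub> = {}"
  by (simp add: pr_eq_empty_iff)

lemma pr_zero: "pr I U \<zero>\<^bsub>R\<^esub> = hprimes I U"
  unfolding mem_pr_iff set_eq_iff using hprimes_carrier
  by (auto simp: cgenideal_def intro!: exI[of _ "\<zero>\<^bsub>R\<^esub>"])

lemma pr_nonempty_if_proper:
  assumes "ideal J R" "J \<noteq> carrier R" "n \<in> J"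
  shows "pr I U n \<noteq> {}"
  using assms zstar.ideal_eq_carrier_if_Units pr_eq_empty_iff ideal.Icarr by metis

lemma maximalideal_pr_disjoint:
  assumes "maximalideal m R" "k \<in> carrier R" "k \<notin> m"
  obtains x where "x \<in> m" "pr I U x \<inter> pr I U k = {}"
proof -
  obtain x a where x: "x \<in> m" "a \<in> carrier R" "\<one>\<^bsub>R\<^esub> = x \<oplus>\<^bsub>R\<^esub> a \<otimes>\<^bsub>R\<^esub> k"
    using zstar.maximalideal_comaximal[OF assms] by blast
  have "x \<in> carrier R" using ideal.Icarr[OF maximalideal.axioms(1)[OF assms(1)] x(1)] .
  then have "pr I U x \<inter> pr I U k \<subseteq> pr I U \<one>\<^bsub>R\<^esub>"
    unfolding x(3) using pr_lincomb[of "\<one>\<^bsub>R\<^esub>" a x k] x(2) by simp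
  then show ?thesis using that x(1) pr_one by blast
qed

lemma maximalideal_pr_upclosed:
  assumes m: "maximalideal m R" and "n \<in> m" "k \<in> carrier R" "pr I U n \<subseteq> pr I U k"
  shows "k \<in> m"
proof (rule ccontr)
  assume "k \<notin> m"
  then obtain x where x: "x \<in> m" "pr I U x \<inter> pr I U k = {}"
    using maximalideal_pr_disjoint[OF m assms(3)] by blast
  have ideal: "ideal m R" and proper: "m \<noteq> carrier R"
    using m by (simp_all add: maximalideal.axioms(1) maximalideal.I_notcarr[symmetric])
  obtain d where "d \<in> m" "pr I U d = pr I U n \<inter> pr I U x"
    using pr_Int_in_ideal[OF ideal \<open>n \<in> m\<close> x(1)] by blast
  then show False using pr_nonempty_if_proper[OF ideal proper] x(2) assms(4) by blast
qed

section \<open>Maximal ideals and maximal filters\<close>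

lemma ideal_filter_pr_filter:
  assumes m: "maximalideal m R"
  shows "pr_filter I U (ideal_filter I U m)"
  unfolding pr_filter_def ideal_filter_def
proof (intro conjI ballI impI)
  have ideal: "ideal m R" and proper: "m \<noteq> carrier R"
    using m by (simp_all add: maximalideal.axioms(1) maximalideal.I_notcarr[symmetric])
  show "pr I U ` m \<subseteq> prZ I U" using ideal.Icarr[OF ideal] pr_in_prZ by blast
  show "{} \<notin> pr I U ` m" using pr_nonempty_if_proper[OF ideal proper] by fastforce
  fix S T assume "S \<in> pr I U ` m" "T \<in> pr I U ` m"
  then obtain a b where "a \<in> m" "b \<in> m" and ST: "S = pr I U a" "T = pr I U b" by blast
  then obtain d where "d \<in> m" "pr I U d = S \<inter> T" using pr_Int_in_ideal[OF ideal] by blast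
  then show "S \<inter> T \<in> pr I U ` m" by (metis imageI)
next
  fix S T assume "S \<in> pr I U ` m" "T \<in> prZ I U" "S \<subseteq> T"
  moreover obtain n where "n \<in> m" "S = pr I U n" using \<open>S \<in> pr I U ` m\<close> by blast
  moreover obtain k where "k \<in> carrier R" "T = pr I U k" using \<open>T \<in> prZ I U\<close> unfolding prZ_def by blast
  ultimately show "T \<in> pr I U ` m" using maximalideal_pr_upclosed[OF m] by blast
qed

lemma ideal_filter_maximal:
  assumes m: "maximalideal m R"
  shows "maximal_pr_filter I U (ideal_filter I U m)"
proof -
  have "G = pr I U ` m" if G: "pr_filter I U G" and sub: "pr I U ` m \<subseteq> G" for G
  proof
    show "G \<subseteq> pr I U ` m"
    proof
      fix T assume "T \<in> G"
      then obtain k where k: "k \<in> carrier R" "T = pr I U k"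
        using G unfolding pr_filter_def prZ_def by blast
      show "T \<in> pr I U ` m"
      proof (cases "k \<in> m")
        case False
        then obtain x where "x \<in> m" "pr I U x \<inter> T = {}"
          using maximalideal_pr_disjoint[OF m k(1)] k(2) by blast
        then show ?thesis using G sub \<open>T \<in> G\<close> unfolding pr_filter_def by (metis imageI subsetD)
      qed (use k in blast)
    qed
  qed (rule sub)
  then show ?thesis
    using ideal_filter_pr_filter[OF m] unfolding maximal_pr_filter_def ideal_filter_def by blast
qed

lemma maximalideal_eq_pr_preimage:
  assumes "maximalideal m R"
  shows "m = {n \<in> carrier R. pr I U n \<in> ideal_filter I U m}"
proof
  show "m \<subseteq> {n \<in> carrier R. pr I U n \<in> ideal_filter I U m}"
    using ideal.Icarr[OF maximalideal.axioms(1)[OF assms]] unfolding ideal_filter_def by blast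
  show "{n \<in> carrier R. pr I U n \<in> ideal_filter I U m} \<subseteq> m"
    unfolding ideal_filter_def using maximalideal_pr_upclosed[OF assms] by force
qed

lemma ideal_filter_inj_on: "inj_on (ideal_filter I U) {m. maximalideal m R}"
proof (rule inj_onI)
  fix m1 m2 assume "m1 \<in> {m. maximalideal m R}" "m2 \<in> {m. maximalideal m R}"
    and eq: "ideal_filter I U m1 = ideal_filter I U m2"
  then have m1: "maximalideal m1 R" and m2: "maximalideal m2 R" by simp_all
  have "m1 = {n \<in> carrier R. pr I U n \<in> ideal_filter I U m1}"
    using m1 by (rule maximalideal_eq_pr_preimage)
  also have "\<dots> = {n \<in> carrier R. pr I U n \<in> ideal_filter I U m2}"
    by (simp only: eq)
  also have "\<dots> = m2"
    using m2 by (rule maximalideal_eq_pr_preimage[symmetric])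
  finally show "m1 = m2" .
qed

lemma pr_subset_hprimes: "pr I U n \<subseteq> hprimes I U"
  unfolding pr_def by blast

lemma maximal_pr_filter_nonempty:
  assumes "maximal_pr_filter I U F"
  shows "F \<noteq> {}"
proof
  assume "F = {}"
  have "cls (\<lambda>i. 2) \<in> hprimes I U" by (rule cls_prime_in_hprimes) simp
  then have "pr_filter I U {hprimes I U}"
    unfolding pr_filter_def prZ_def using pr_zero pr_subset_hprimes by blast
  then show False using assms \<open>F = {}\<close> unfolding maximal_pr_filter_def by blast
qed

lemma pr_filter_upclosed:
  "pr_filter I U F \<Longrightarrow> S \<in> F \<Longrightarrow> n \<in> carrier R \<Longrightarrow> S \<subseteq> pr I U n \<Longrightarrow> pr I U n \<in> F"
  unfolding pr_filter_def using pr_in_prZ by blast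

lemma maximal_pr_filter_disjoint:
  assumes F: "maximal_pr_filter I U F" and T: "T \<in> prZ I U" "T \<notin> F"
  shows "\<exists>S\<in>F. S \<inter> T = {}"
proof (rule ccontr)
  assume meets: "\<not> (\<exists>S\<in>F. S \<inter> T = {})"
  define G where "G = {T' \<in> prZ I U. \<exists>S\<in>F. S \<inter> T \<subseteq> T'}"
  have filter: "pr_filter I U F" using F unfolding maximal_pr_filter_def by blast
  have "pr_filter I U G"
    unfolding pr_filter_def
  proof (intro conjI ballI impI)
    show "G \<subseteq> prZ I U" unfolding G_def by blast
    show "{} \<notin> G" using meets unfolding G_def by blast
  next
    fix T1 T2 assume "T1 \<in> G" "T2 \<in> G"
    then obtain S1 S2 where "S1 \<in> F" "S2 \<in> F" "S1 \<inter> T \<subseteq> T1" "S2 \<inter> T \<subseteq> T2"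
      and "T1 \<in> prZ I U" "T2 \<in> prZ I U" unfolding G_def by blast
    moreover from this have "S1 \<inter> S2 \<in> F" using filter unfolding pr_filter_def by blast
    ultimately show "T1 \<inter> T2 \<in> G" unfolding G_def using prZ_Int by blast
  next
    fix T1 T2 assume "T1 \<in> G" "T2 \<in> prZ I U" "T1 \<subseteq> T2"
    then show "T2 \<in> G" unfolding G_def by blast
  qed
  moreover have "F \<subseteq> G" using filter unfolding G_def pr_filter_def by blast
  ultimately have "G = F" using F unfolding maximal_pr_filter_def by blast
  moreover have "T \<in> G" using T(1) maximal_pr_filter_nonempty[OF F] unfolding G_def by blast
  ultimately show False using T(2) by blast
qed

lemma pr_filter_preimage_ideal:
  assumes F: "pr_filter I U F" "F \<noteq> {}"
  shows "ideal {n \<in> carrier R. pr I U n \<in> F} R"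
proof (rule zstar.idealI_comm)
  show "{n \<in> carrier R. pr I U n \<in> F} \<subseteq> carrier R" by blast
next
  obtain S where S: "S \<in> F" using F(2) by blast
  then have "S \<subseteq> pr I U \<zero>\<^bsub>R\<^esub>"
    using F(1) pr_subset_hprimes unfolding pr_zero pr_filter_def prZ_def by blast
  then have "pr I U \<zero>\<^bsub>R\<^esub> \<in> F" using pr_filter_upclosed[OF F(1) S] by simp
  then show "\<zero>\<^bsub>R\<^esub> \<in> {n \<in> carrier R. pr I U n \<in> F}" by simp
next
  fix a b assume "a \<in> {n \<in> carrier R. pr I U n \<in> F}" "b \<in> {n \<in> carrier R. pr I U n \<in> F}"
  then have ab: "a \<in> carrier R" "b \<in> carrier R" and "pr I U a \<in> F" "pr I U b \<in> F" by auto
  then have Int: "pr I U a \<inter> pr I U b \<in> F" using F(1) unfolding pr_filter_def by blast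
  have "pr I U a \<inter> pr I U b \<subseteq> pr I U (a \<oplus>\<^bsub>R\<^esub> b)"
    using pr_lincomb[OF zstar.one_closed zstar.one_closed, of a b] ab by simp
  then have "pr I U (a \<oplus>\<^bsub>R\<^esub> b) \<in> F" using pr_filter_upclosed[OF F(1) Int] ab by simp
  then show "a \<oplus>\<^bsub>R\<^esub> b \<in> {n \<in> carrier R. pr I U n \<in> F}" using ab by simp
next
  fix a x assume "a \<in> {n \<in> carrier R. pr I U n \<in> F}" and x: "x \<in> carrier R"
  then have a: "a \<in> carrier R" "pr I U a \<in> F" by auto
  have "pr I U (x \<otimes>\<^bsub>R\<^esub> a) \<in> F"
    using pr_filter_upclosed[OF F(1) a(2) _ pr_subset_pr_mult[OF x]] a(1) x by simp
  then show "x \<otimes>\<^bsub>R\<^esub> a \<in> {n \<in> carrier R. pr I U n \<in> F}" using a(1) x by simp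
qed

lemma maximal_pr_filter_preimage_maximalideal:
  assumes F: "maximal_pr_filter I U F"
  shows "maximalideal {n \<in> carrier R. pr I U n \<in> F} R" (is "maximalideal ?m R")
proof -
  have filter: "pr_filter I U F" using F unfolding maximal_pr_filter_def by blast
  have ideal: "ideal ?m R"
    using pr_filter_preimage_ideal[OF filter maximal_pr_filter_nonempty[OF F]] .
  show ?thesis
  proof (rule maximalidealI[OF ideal])
    have "\<one>\<^bsub>R\<^esub> \<notin> ?m" using filter pr_one unfolding pr_filter_def by auto
    then show "carrier R \<noteq> ?m" by auto
  next
    fix J assume J: "ideal J R" "?m \<subseteq> J" "J \<subseteq> carrier R"
    show "J = ?m \<or> J = carrier R"
    proof (cases "J = ?m")
      case False
      then obtain k where k: "k \<in> J" "k \<notin> ?m" using J(2) by blast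
      then have "k \<in> carrier R" "pr I U k \<notin> F" using J(3) by auto
      then obtain S where "S \<in> F" "S \<inter> pr I U k = {}"
        using maximal_pr_filter_disjoint[OF F pr_in_prZ] by blast
      moreover obtain n where "n \<in> carrier R" "S = pr I U n"
        using \<open>S \<in> F\<close> filter unfolding pr_filter_def prZ_def by blast
      ultimately have "n \<in> J" "pr I U n \<inter> pr I U k = {}" using J(2) by auto
      then obtain d where "d \<in> J" "pr I U d = {}" using pr_Int_in_ideal[OF J(1) _ k(1)] by metis
      then show ?thesis using pr_nonempty_if_proper[OF J(1)] by blast
    qed simp
  qed
qed

lemma ideal_filter_pr_preimage:
  assumes "pr_filter I U F"
  shows "ideal_filter I U {n \<in> carrier R. pr I U n \<in> F} = F"
proof
  show "ideal_filter I U {n \<in> carrier R. pr I U n \<in> F} \<subseteq> F"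
    unfolding ideal_filter_def by auto
  show "F \<subseteq> ideal_filter I U {n \<in> carrier R. pr I U n \<in> F}"
  proof
    fix S assume "S \<in> F"
    moreover from this obtain n where "n \<in> carrier R" "S = pr I U n"
      using assms unfolding pr_filter_def prZ_def by blast
    ultimately show "S \<in> ideal_filter I U {n \<in> carrier R. pr I U n \<in> F}"
      unfolding ideal_filter_def by auto
  qed
qed

lemma ideal_filter_image: "ideal_filter I U ` {m. maximalideal m R} = {F. maximal_pr_filter I U F}"
proof
  show "ideal_filter I U ` {m. maximalideal m R} \<subseteq> {F. maximal_pr_filter I U F}"
    by (auto intro: ideal_filter_maximal)
  show "{F. maximal_pr_filter I U F} \<subseteq> ideal_filter I U ` {m. maximalideal m R}"
  proof
    fix F assume "F \<in> {F. maximal_pr_filter I U F}"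
    then have F: "maximal_pr_filter I U F" by simp
    then have "ideal_filter I U {n \<in> carrier R. pr I U n \<in> F} = F"
      by (intro ideal_filter_pr_preimage) (simp add: maximal_pr_filter_def)
    moreover have "{n \<in> carrier R. pr I U n \<in> F} \<in> {m. maximalideal m R}"
      using maximal_pr_filter_preimage_maximalideal[OF F] by simp
    ultimately show "F \<in> ideal_filter I U ` {m. maximalideal m R}"
      by (rule image_eqI[OF sym])
  qed
qed

section \<open>Principal filters\<close>

lemma hprime_nonunit_divisor:
  assumes p: "p \<in> hprimes I U"
    and d: "d \<in> carrier R" "p \<in> PIdl\<^bsub>R\<^esub> d" "d \<notin> Units R"
  shows "d \<in> PIdl\<^bsub>R\<^esub> p"
proof -
  have pc: "p \<in> carrier R" using p hprimes_carrier by blast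
  have "d \<in> {\<one>\<^bsub>R\<^esub>, \<ominus>\<^bsub>R\<^esub> \<one>\<^bsub>R\<^esub>, p, \<ominus>\<^bsub>R\<^esub> p}"
    using p d(1,2) unfolding hprimes_def zdvd_iff_mem_cgenideal by blast
  moreover have "\<ominus>\<^bsub>R\<^esub> p \<in> PIdl\<^bsub>R\<^esub> p"
    unfolding cgenideal_def using pc by (intro CollectI exI[of _ "\<ominus>\<^bsub>R\<^esub> \<one>\<^bsub>R\<^esub>"]) (simp add: zstar.l_minus)
  ultimately show ?thesis
    using d(3) zstar.cgenideal_self[OF pc] zstar.Units_minus_one_closed by auto
qed

lemma principal_ideal_filter_cgenideal:
  assumes p: "p \<in> hprimes I U"
  shows "principal_pr_filter I U (ideal_filter I U (PIdl\<^bsub>R\<^esub> p))"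
  unfolding principal_pr_filter_def
proof (intro bexI[of _ p] ballI)
  fix S assume "S \<in> prZ I U"
  then obtain k where k: "k \<in> carrier R" "S = pr I U k" unfolding prZ_def by blast
  show "S \<in> ideal_filter I U (PIdl\<^bsub>R\<^esub> p) \<longleftrightarrow> pr I U p \<subseteq> S"
  proof
    assume "S \<in> ideal_filter I U (PIdl\<^bsub>R\<^esub> p)"
    then obtain y where "y \<in> PIdl\<^bsub>R\<^esub> p" "S = pr I U y" unfolding ideal_filter_def by blast
    then show "pr I U p \<subseteq> S" using pr_antimono by blast
  next
    assume "pr I U p \<subseteq> S"
    then have "k \<in> PIdl\<^bsub>R\<^esub> p" using hprime_mem_pr_self[OF p] k(2) mem_pr_iff by blast
    then show "S \<in> ideal_filter I U (PIdl\<^bsub>R\<^esub> p)" unfolding ideal_filter_def using k(2) by blast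
  qed
qed (use p hprimes_carrier in blast)

lemma maximalideal_eq_cgenideal_hprime:
  assumes m: "maximalideal m R" and hp: "p \<in> hprimes I U" and "p \<in> m"
  shows "m = PIdl\<^bsub>R\<^esub> p"
proof
  have ideal: "ideal m R" and proper: "m \<noteq> carrier R"
    using m by (simp_all add: maximalideal.axioms(1) maximalideal.I_notcarr[symmetric])
  have pc: "p \<in> carrier R" using hp hprimes_carrier by blast
  show "PIdl\<^bsub>R\<^esub> p \<subseteq> m" using zstar.cgenideal_minimal[OF ideal \<open>p \<in> m\<close>] .
  show "m \<subseteq> PIdl\<^bsub>R\<^esub> p"
  proof
    fix k assume k: "k \<in> m"
    obtain u v where uv: "u \<in> carrier R" "v \<in> carrier R"
      and dvd: "p \<in> PIdl\<^bsub>R\<^esub> (u \<otimes>\<^bsub>R\<^esub> p \<oplus>\<^bsub>R\<^esub> v \<otimes>\<^bsub>R\<^esub> k)"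
        "k \<in> PIdl\<^bsub>R\<^esub> (u \<otimes>\<^bsub>R\<^esub> p \<oplus>\<^bsub>R\<^esub> v \<otimes>\<^bsub>R\<^esub> k)"
      using zstar_bezout[OF pc ideal.Icarr[OF ideal k]] by blast
    define d where "d = u \<otimes>\<^bsub>R\<^esub> p \<oplus>\<^bsub>R\<^esub> v \<otimes>\<^bsub>R\<^esub> k"
    have dm: "d \<in> m" unfolding d_def using zstar.ideal_lincomb_closed[OF ideal \<open>p \<in> m\<close> k uv] .
    have "d \<notin> Units R"
    proof
      assume "d \<in> Units R"
      with proper show False using zstar.ideal_eq_carrier_if_Units[OF ideal dm] by simp
    qed
    then have "d \<in> PIdl\<^bsub>R\<^esub> p"
      using hprime_nonunit_divisor[OF hp ideal.Icarr[OF ideal dm] dvd(1)[folded d_def]] by simp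
    then show "k \<in> PIdl\<^bsub>R\<^esub> p"
      using dvd(2)[folded d_def] zstar.cgenideal_minimal[OF ideal_cgenideal_hprime[OF hp]] by blast
  qed
qed

lemma maximalideal_eq_cgenideal_if_principal:
  assumes m: "maximalideal m R" and principal: "principal_pr_filter I U (ideal_filter I U m)"
  shows "\<exists>p\<in>hprimes I U. m = PIdl\<^bsub>R\<^esub> p"
proof -
  have ideal: "ideal m R" and proper: "m \<noteq> carrier R"
    using m by (simp_all add: maximalideal.axioms(1) maximalideal.I_notcarr[symmetric])
  obtain n where n: "n \<in> carrier R"
    and gen: "\<forall>S\<in>prZ I U. S \<in> pr I U ` m \<longleftrightarrow> pr I U n \<subseteq> S"
    using principal unfolding principal_pr_filter_def ideal_filter_def by (elim bexE)
  obtain n' where "n' \<in> m" and n': "pr I U n' = pr I U n" using gen pr_in_prZ[OF n] by auto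
  then have "pr I U n \<noteq> {}" using pr_nonempty_if_proper[OF ideal proper \<open>n' \<in> m\<close>] by simp
  then obtain p where p: "p \<in> pr I U n" by blast
  then have hp: "p \<in> hprimes I U" using pr_subset_hprimes by blast
  have "p \<in> m"
  proof (rule ccontr)
    assume "p \<notin> m"
    then obtain x where x: "x \<in> m" "pr I U x \<inter> pr I U p = {}"
      using maximalideal_pr_disjoint[OF m] hp hprimes_carrier by blast
    have "pr I U x \<in> pr I U ` m" using x(1) by (rule imageI)
    then have "pr I U n \<subseteq> pr I U x" using gen pr_in_prZ[OF ideal.Icarr[OF ideal x(1)]] by blast
    then show False using p x(2) hprime_mem_pr_self[OF hp] by blast
  qed
  then show ?thesis using maximalideal_eq_cgenideal_hprime[OF m hp] hp by blast
qed

end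

theorem theorem4p6:
  fixes I :: "'i set" and U :: "'i set set"
  assumes "countable I" and "infinite I" and "nonprincipal_ultrafilter_on I U"
  shows "bij_betw (ideal_filter I U) {m. maximalideal m (zstar I U)}
           {F. maximal_pr_filter I U F}
       \<and> (\<forall>m. maximalideal m (zstar I U) \<longrightarrow>
            (principal_pr_filter I U (ideal_filter I U m) \<longleftrightarrow>
             (\<exists>p\<in>hprimes I U. m = PIdl\<^bsub>zstar I U\<^esub> p)))"
proof -
  interpret int_ultrapower I U
    using assms(3) by unfold_locales (simp add: nonprincipal_ultrafilter_on_def)
  have "bij_betw (ideal_filter I U) {m. maximalideal m R} {F. maximal_pr_filter I U F}"
    unfolding bij_betw_def using ideal_filter_inj_on ideal_filter_image by blast
  moreover have "principal_pr_filter I U (ideal_filter I U m) \<longleftrightarrow> (\<exists>p\<in>hprimes I U. m = PIdl\<^bsub>R\<^esub> p)"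
    if "maximalideal m R" for m
    using maximalideal_eq_cgenideal_if_principal[OF that] principal_ideal_filter_cgenideal by blast
  ultimately show ?thesis by blast
qed

end
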